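(* Assume that the set $\mathcal{F}=\{(\mathbf{x},\mathbf{y}):\mathbf{x}\in\mathbb{R}^{n_1}_+,\ A\mathbf{x}\le\mathbf{b},\ \mathbf{y}_s\in\mathbb{R}^{n_2}_+,\ T_s\mathbf{x}+W_s\mathbf{y}_s\ge\mathbf{h}_s\ \forall s\in S\}$ is compact. Define the Lagrangian $\mathcal{L}:\mathcal{F}\times\mathcal{M}^F_+(\mathcal{C})\to\mathbb{R}$ by $$\mathcal{L}(\mathbf{x},\mathbf{y},\mu)=\mathbf{f}^\top\mathbf{x}+\sum_{s\in S}p_s\mathbf{q}_s^\top\mathbf{y}_s+\int_{\mathcal{C}}\operatorname{CVaR}_\alpha(\mathbf{c}^\top\hat{\mathbf{G}}(\mathbf{x},\mathbf{y}))\,\mu(\mathrm{d}\mathbf{c})-\int_{\mathcal{C}}\operatorname{CVaR}_\alpha(\mathbf{c}^\top\mathbf{Z})\,\mu(\mathrm{d}\mathbf{c}),$$ and the Lagrangian dual problem $\max_{\mu\in\mathcal{M}^F_+(\mathcal{C})}\min_{(\mathbf{x},\mathbf{y})\in\mathcal{F}}\mathcal{L}(\mathbf{x},\mathbf{y},\mu)$. If the primal problem $(\mathrm{LinearP})$, namely $\min\{\mathbf{f}^\top\mathbf{x}+\sum_sp_s\mathbf{q}_s^\top\mathbf{y}_s:(\mathbf{x},\mathbf{y})\in\mathcal{F},\ \operatorname{CVaR}_\alpha(\mathbf{c}^\top\hat{\mathbf{G}}(\mathbf{x},\mathbf{y}))\le\operatorname{CVaR}_\alpha(\mathbf{c}^\top\mathbf{Z})\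 \forall\mathbf{c}\in\mathcal{C}\}$, has an optimal solution, then the Lagrangian dual problem also has an optimal solution and the optimal objective values coincide. Moreover, a primal feasible solution $(\mathbf{x}^*,\mathbf{y}^* )$ of $(\mathrm{LinearP})$ and a $\mu^*\in\mathcal{M}^F_+(\mathcal{C})$ are simultaneously optimal (for the primal and the Lagrangian dual, respectively) if and only if $$\int_{\mathcal{C}}\operatorname{CVaR}_\alpha(\mathbf{c}^\top\hat{\mathbf{G}}(\mathbf{x}^*,\mathbf{y}^* ))\,\mu^*(\mathrm{d}\mathbf{c})=\int_{\mathcal{C}}\operatorname{CVaR}_\alpha(\mathbf{c}^\top\mathbf{Z})\,\mu^*(\mathrm{d}\mathbf{c})\quad\text{and}\quad \mathcal{L}(\mathbf{x}^*,\mathbf{y}^*,\mu^* )=\min_{(\mathbf{x},\mathbf{y})\in\mathcal{F}}\mathcal{L}(\mathbf{x},\mathbf{y},\mu^* ).$$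
   Context: Finite probability space $\Omega=\{\omega_1,\dots,\omega_m\}$, $\Pi(\omega_s)=p_s>0$, $S=\{1,\dots,m\}$; smaller values are preferred. $\operatorname{CVaR}_\alpha(V)=\min_{\eta\in\mathbb{R}}\{\eta+\frac{1}{1-\alpha}\mathbb{E}[(V-\eta)_+]\}$ for $\alpha\in[0,1)$. Benchmark $\mathbf{Z}$: random vector in $\mathbb{R}^d$ with finitely many realizations. $\mathcal{C}$: nonempty polyhedron contained in the unit simplex of $\mathbb{R}^d$. $\mathcal{M}^F_+(\mathcal{C})$: the set of finitely supported finite nonnegative measures on $\mathcal{C}$, with $\int_{\mathcal{C}}u(\mathbf{c})\mu(\mathrm{d}\mathbf{c})=\sum_{\mathbf{c}:\mu(\{\mathbf{c}\})>0}u(\mathbf{c})\mu(\{\mathbf{c}\})$. Data: $A\in\mathbb{R}^{m_1\times n_1}$, $\mathbf{b}\in\mathbb{R}^{m_1}$, $\mathbf{f}\in\mathbb{R}^{n_1}$; for each $s$: $\mathbf{q}_s\in\mathbb{R}^{n_2}$, $T_s\in\mathbb{R}^{m_2\times n_1}$, $W_s\in\mathbb{R}^{m_2\times n_2}$, $\mathbf{h}_s\in\mathbb{R}^{m_2}$, $\bar{\mathbf{g}}_s\in\mathbb{R}^{d\times n_1}$, $\tilde{\mathbf{g}}_s\in\mathbb{R}^{d\times n_2}$, $\hat{\mathbf{g}}_s(\mathbf{x},\mathbf{y}_s)=\bar{\mathbf{g}}_s\mathbf{x}+\tilde{\mathbf{g}}_s\mathbf{y}_s$. $\hat{\mathbf{G}}(\mathbf{x},\mathbf{y})$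 is the random vector with value $\hat{\mathbf{g}}_s(\mathbf{x},\mathbf{y}_s)$ at $\omega_s$; $\mathbf{y}=(\mathbf{y}_s)_{s\in S}$. *)

theory Defs
  imports "HOL-Analysis.Analysis"
begin

text \<open>The minimum is attained, so it coincides with the infimum used here.\<close>
definition cvar :: "real \<Rightarrow> 'i set \<Rightarrow> ('i \<Rightarrow> real) \<Rightarrow> ('i \<Rightarrow> real) \<Rightarrow> real" where
  "cvar \<alpha> I w V = (INF \<eta>::real. \<eta> + (1 / (1 - \<alpha>)) * (\<Sum>i\<in>I. w i * max 0 (V i - \<eta>)))"

text \<open>Finitely supported finite nonnegative measures on C, represented by their
  point masses (mass function).\<close>
definition MFplus :: "'a set \<Rightarrow> ('a \<Rightarrow> real) set" where
  "MFplus C = {\<mu>. (\<forall>c. 0 \<le> \<mu> c) \<and> finite {c. \<mu> c \<noteq> 0} \<and> {c. \<mu> c \<noteq> 0} \<subseteq> C}"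

definition fint :: "('a \<Rightarrow> real) \<Rightarrow> ('a \<Rightarrow> real) \<Rightarrow> real" where
  "fint \<mu> u = (\<Sum>c\<in>{c. \<mu> c \<noteq> 0}. u c * \<mu> c)"

definition unit_simplex :: "(real^'d) set" where
  "unit_simplex = {c. (\<forall>i. 0 \<le> c $ i) \<and> (\<Sum>i\<in>UNIV. c $ i) = 1}"

end

theory Submission
  imports Defs
begin

text \<open>
  The CVaR dominance constraint is semi-infinite, but it is equivalent to finitely many linear
  constraints. On the one hand, CVaR(V) is the maximum of the expectation of \<xi> V over the risk
  envelope {0 \<le> \<xi> \<le> p / (1 - \<alpha>), \<Sum> \<xi> = 1}, a polytope, so CVaR(V) \<le> t amounts to one
  linear inequality per vertex \<xi> of the envelope. On the other hand, CVaR(c \<bullet> Z) is a minimum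
  over (\<eta>, u) with u \<ge> 0 and u k \<ge> c \<bullet> z k - \<eta>, and these inequalities cut out a polytope of
  triples (c, \<eta>, u) with c \<in> C; a constraint that is linear in c therefore only has to be
  checked at the c-components C0 of its vertices. The primal problem is thus a finite linear
  program. LP duality gives nonnegative multipliers on C0 \<times> \<Xi>; summing them over \<Xi> yields a
  finitely supported measure \<mu> on C such that the optimal value bounds the Lagrangian for \<mu>
  from below on F. Together with weak duality this gives strong duality and the
  complementary slackness characterisation of optimal pairs.
\<close>

section \<open>Lagrange multipliers for linear programs\<close>

lemma convex_cone_hull_subset_nonneg_combinations:
  fixes g :: "'i \<Rightarrow> 'a::real_vector"
  assumes "finite I"
  shows "convex_cone hull (g ` I) \<subseteq> {\<Sum>i\<in>I. l i *\<^sub>R g i | l. \<forall>i\<in>I. 0 \<le> l i}"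
    (is "_ \<subseteq> ?K")
proof (rule hull_minimal)
  show "g ` I \<subseteq> ?K"
  proof
    fix x assume "x \<in> g ` I"
    then obtain j where j: "j \<in> I" "x = g j" by auto
    have "(\<Sum>i\<in>I. (if i = j then 1 else 0) *\<^sub>R g i) = g j"
      using assms j by (simp add: if_distrib[of "\<lambda>c. c *\<^sub>R _"] cong: if_cong)
    then show "x \<in> ?K" using j
      by (intro CollectI exI[of _ "\<lambda>i. if i = j then 1 else 0"]) auto
  qed
  show "convex_cone ?K"
    unfolding convex_cone_iff
  proof (intro conjI ballI allI impI)
    show "0 \<in> ?K" by (intro CollectI exI[of _ "\<lambda>i. 0"]) auto
  next
    fix x y assume "x \<in> ?K" "y \<in> ?K"
    then obtain l1 l2 where "x = (\<Sum>i\<in>I. l1 i *\<^sub>R g i)" "\<forall>i\<in>I. 0 \<le> l1 i"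
      "y = (\<Sum>i\<in>I. l2 i *\<^sub>R g i)" "\<forall>i\<in>I. 0 \<le> l2 i" by blast
    then show "x + y \<in> ?K"
      by (intro CollectI exI[of _ "\<lambda>i. l1 i + l2 i"]) (auto simp: scaleR_add_left sum.distrib)
  next
    fix x and c :: real assume "x \<in> ?K" "0 \<le> c"
    then obtain l where "x = (\<Sum>i\<in>I. l i *\<^sub>R g i)" "\<forall>i\<in>I. 0 \<le> l i" by blast
    then show "c *\<^sub>R x \<in> ?K" using \<open>0 \<le> c\<close>
      by (intro CollectI exI[of _ "\<lambda>i. c * l i"]) (auto simp: scaleR_sum_right)
  qed
qed

lemma farkas_lemma:
  fixes g :: "'i \<Rightarrow> 'a::euclidean_space"
  assumes "finite I"
  shows "(\<exists>l. (\<forall>i\<in>I. 0 \<le> l i) \<and> y = (\<Sum>i\<in>I. l i *\<^sub>R g i)) \<or>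
         (\<exists>w. 0 < w \<bullet> y \<and> (\<forall>i\<in>I. w \<bullet> g i \<le> 0))"
proof (cases "y \<in> convex_cone hull (g ` I)")
  case True
  then show ?thesis using convex_cone_hull_subset_nonneg_combinations[OF assms, of g] by blast
next
  case False
  obtain a b where ab: "a \<bullet> y < b" "\<forall>x\<in>convex_cone hull (g ` I). b < a \<bullet> x"
    using separating_hyperplane_closed_point[OF convex_convex_cone_hull _ False]
      closed_convex_cone_hull assms by blast
  have b_neg: "b < 0" using ab(2) convex_cone_hull_contains_0 by fastforce
  have "(-a) \<bullet> g i \<le> 0" if "i \<in> I" for i
  proof (rule ccontr)
    assume "\<not> ?thesis"
    hence neg: "a \<bullet> g i < 0" by simp
    \<comment> \<open>scaling g i onto the separating hyperplane gives a point of the cone violating it\<close>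
    have "(b / (a \<bullet> g i)) *\<^sub>R g i \<in> convex_cone hull (g ` I)"
      using that neg b_neg by (intro convex_cone_hull_mul hull_inc) (auto simp: divide_nonpos_neg)
    hence "b < a \<bullet> ((b / (a \<bullet> g i)) *\<^sub>R g i)" using ab by blast
    then show False using neg by simp
  qed
  moreover have "0 < (-a) \<bullet> y" using ab(1) b_neg by simp
  ultimately show ?thesis by blast
qed

lemma lp_objective_nonneg_on_homogenised_cone:
  fixes a :: "'i \<Rightarrow> 'a::euclidean_space" and f :: 'a
  assumes feasible: "\<forall>i\<in>I. a i \<bullet> u\<^sub>0 \<le> b i"
    and optimal: "\<And>u. \<forall>i\<in>I. a i \<bullet> u \<le> b i \<Longrightarrow> f \<bullet> u\<^sub>0 \<le> f \<bullet> u"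
    and cone: "t \<le> 0" "\<forall>i\<in>I. a i \<bullet> w + b i * t \<le> 0"
  shows "0 \<le> f \<bullet> w + (f \<bullet> u\<^sub>0) * t"
proof (cases "t = 0")
  case True
  \<comment> \<open>w is a recession direction of the feasible set\<close>
  have "a i \<bullet> (u\<^sub>0 + w) \<le> b i" if "i \<in> I" for i
    using bspec[OF feasible that] bspec[OF cone(2) that] True by (simp add: inner_add_right)
  then have "\<forall>i\<in>I. a i \<bullet> (u\<^sub>0 + w) \<le> b i" by blast
  from optimal[OF this] show ?thesis using True by (simp add: inner_add_right)
next
  case False
  with cone(1) have "t < 0" by simp
  \<comment> \<open>w / (-t) is a feasible point\<close>
  have "a i \<bullet> ((1 / -t) *\<^sub>R w) \<le> b i" if "i \<in> I" for i
    using bspec[OF cone(2) that] \<open>t < 0\<close> by (simp add: field_simps)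
  then have "f \<bullet> u\<^sub>0 \<le> f \<bullet> ((1 / -t) *\<^sub>R w)" by (intro optimal ballI)
  then show ?thesis using \<open>t < 0\<close> by (simp add: field_simps)
qed

lemma lp_lagrange_multipliers:
  fixes a :: "'i \<Rightarrow> 'a::euclidean_space" and f :: 'a
  assumes fin: "finite I" and feasible: "\<forall>i\<in>I. a i \<bullet> u\<^sub>0 \<le> b i"
    and optimal: "\<And>u. \<forall>i\<in>I. a i \<bullet> u \<le> b i \<Longrightarrow> f \<bullet> u\<^sub>0 \<le> f \<bullet> u"
  shows "\<exists>l. (\<forall>i\<in>I. 0 \<le> l i) \<and> (\<forall>u. f \<bullet> u\<^sub>0 \<le> f \<bullet> u + (\<Sum>i\<in>I. l i * (a i \<bullet> u - b i)))"
proof -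
  \<comment> \<open>Farkas for the homogenised system: (-f, -v) against the rows (a i, b i) and (0, 1)\<close>
  define v where "v = f \<bullet> u\<^sub>0"
  define g :: "'i option \<Rightarrow> 'a \<times> real" where
    "g j = (case j of None \<Rightarrow> (0, 1) | Some i \<Rightarrow> (a i, b i))" for j
  define J where "J = insert None (Some ` I)"
  have sum_J: "(\<Sum>j\<in>J. h j) = h None + (\<Sum>i\<in>I. h (Some i))" for h :: "'i option \<Rightarrow> 'b::comm_monoid_add"
    using fin by (simp add: J_def sum.reindex)
  have "\<not> (0 < w \<bullet> (-f, -v) \<and> (\<forall>j\<in>J. w \<bullet> g j \<le> 0))" for w
  proof
    assume separating: "0 < w \<bullet> (-f, -v) \<and> (\<forall>j\<in>J. w \<bullet> g j \<le> 0)"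
    obtain w1 t where w: "w = (w1, t)" by (cases w)
    have "t \<le> 0" "\<forall>i\<in>I. a i \<bullet> w1 + b i * t \<le> 0"
      using separating by (auto simp: w J_def g_def mult.commute inner_commute)
    from lp_objective_nonneg_on_homogenised_cone[OF feasible optimal this] separating
    show False by (simp add: w v_def mult.commute inner_commute)
  qed
  then obtain l where l: "\<forall>j\<in>J. 0 \<le> l j" "(-f, -v) = (\<Sum>j\<in>J. l j *\<^sub>R g j)"
    using farkas_lemma[of J "(-f, -v)" g] fin unfolding J_def by blast
  have f_eq: "-f = (\<Sum>i\<in>I. l (Some i) *\<^sub>R a i)"
    using arg_cong[OF l(2), of fst] by (simp add: sum_J g_def fst_sum)
  have v_eq: "-v = l None + (\<Sum>i\<in>I. l (Some i) * b i)"
    using arg_cong[OF l(2), of snd] by (simp add: sum_J g_def snd_sum)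
  have "0 \<le> l None" "\<forall>i\<in>I. 0 \<le> l (Some i)" using l(1) by (auto simp: J_def)
  moreover have "(\<Sum>i\<in>I. l (Some i) * (a i \<bullet> u - b i)) = - (f \<bullet> u) + v + l None" for u
    using f_eq v_eq
    by (simp add: inner_sum_left right_diff_distrib sum_subtractf flip: inner_minus_left)
  ultimately show ?thesis by (intro exI[of _ "\<lambda>i. l (Some i)"]) (auto simp: v_def)
qed

lemma linear_functional_eq_inner:
  fixes f :: "'a::euclidean_space \<Rightarrow> real"
  assumes "linear f"
  shows "f u = adjoint f 1 \<bullet> u"
  using adjoint_works[OF assms, of u 1] by (simp add: inner_commute)

lemma polyhedron_as_halfspaces:
  fixes K :: "'a::euclidean_space set"
  assumes "polyhedron K"
  obtains H and a :: "'a set \<Rightarrow> 'a" and \<beta> where "finite H" "\<And>u. u \<in> K \<longleftrightarrow> (\<forall>h\<in>H. a h \<bullet> u \<le> \<beta> h)"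
proof -
  obtain H where H: "finite H" "K = \<Inter>H" "\<forall>h\<in>H. \<exists>a \<beta>. a \<noteq> 0 \<and> h = {x. a \<bullet> x \<le> \<beta>}"
    using assms unfolding polyhedron_def by blast
  have "\<exists>a\<beta>. h = {x. fst a\<beta> \<bullet> x \<le> snd a\<beta>}" if "h \<in> H" for h
  proof -
    obtain a \<beta> where "h = {x. a \<bullet> x \<le> \<beta>}" using bspec[OF H(3) \<open>h \<in> H\<close>] by iprover
    then show ?thesis by (intro exI[of _ "(a, \<beta>)"]) simp
  qed
  then obtain a\<beta> where "\<forall>h\<in>H. h = {x. fst (a\<beta> h) \<bullet> x \<le> snd (a\<beta> h)}"
    using bchoice[of H] by meson
  with H(1,2) show ?thesis
    by (intro that[of H "\<lambda>h. fst (a\<beta> h)" "\<lambda>h. snd (a\<beta> h)"]) auto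
qed

lemma lp_lagrange_multipliers_polyhedron:
  fixes g :: "'i \<Rightarrow> 'a::euclidean_space \<Rightarrow> real" and f :: "'a \<Rightarrow> real"
  assumes "polyhedron K" and fin: "finite I"
    and lin_g: "\<And>i. i \<in> I \<Longrightarrow> linear (g i)" and lin_f: "linear f"
    and feasible: "u\<^sub>0 \<in> K" "\<forall>i\<in>I. g i u\<^sub>0 \<le> b i"
    and optimal: "\<And>u. u \<in> K \<Longrightarrow> \<forall>i\<in>I. g i u \<le> b i \<Longrightarrow> f u\<^sub>0 \<le> f u"
  shows "\<exists>l. (\<forall>i\<in>I. 0 \<le> l i) \<and> (\<forall>u\<in>K. f u\<^sub>0 \<le> f u + (\<Sum>i\<in>I. l i * (g i u - b i)))"
proof -
  obtain H :: "'a set set" and aH \<beta>H where H: "finite H" and K_iff: "\<And>u. u \<in> K \<longleftrightarrow> (\<forall>h\<in>H. aH h \<bullet> u \<le> \<beta>H h)"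
    using polyhedron_as_halfspaces[OF \<open>polyhedron K\<close>] by blast
  have g_inner: "g i u = adjoint (g i) 1 \<bullet> u" if "i \<in> I" for i u
    using linear_functional_eq_inner[OF lin_g[OF that]] .
  have f_inner: "f u = adjoint f 1 \<bullet> u" for u
    using linear_functional_eq_inner[OF lin_f] .
  \<comment> \<open>the constraints of K become further rows of one finite linear program\<close>
  define a where "a j = (case j of Inl i \<Rightarrow> adjoint (g i) 1 | Inr h \<Rightarrow> aH h)" for j
  define \<beta> where "\<beta> j = (case j of Inl i \<Rightarrow> b i | Inr h \<Rightarrow> \<beta>H h)" for j
  have rows: "(\<forall>j\<in>I <+> H. a j \<bullet> u \<le> \<beta> j) \<longleftrightarrow> u \<in> K \<and> (\<forall>i\<in>I. g i u \<le> b i)" for u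
  proof -
    have "(\<forall>j\<in>I <+> H. P j) \<longleftrightarrow> (\<forall>i\<in>I. P (Inl i)) \<and> (\<forall>h\<in>H. P (Inr h))" for P
      by blast
    then show ?thesis unfolding K_iff by (auto simp: a_def \<beta>_def g_inner)
  qed
  have "\<exists>l. (\<forall>j\<in>I <+> H. 0 \<le> l j) \<and>
      (\<forall>u. adjoint f 1 \<bullet> u\<^sub>0 \<le> adjoint f 1 \<bullet> u + (\<Sum>j\<in>I <+> H. l j * (a j \<bullet> u - \<beta> j)))"
  proof (rule lp_lagrange_multipliers)
    show "\<forall>j\<in>I <+> H. a j \<bullet> u\<^sub>0 \<le> \<beta> j" using feasible rows by blast
    show "adjoint f 1 \<bullet> u\<^sub>0 \<le> adjoint f 1 \<bullet> u" if "\<forall>j\<in>I <+> H. a j \<bullet> u \<le> \<beta> j" for u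
      using optimal that rows by (simp flip: f_inner)
  qed (use fin H in simp)
  then obtain l where l: "\<forall>j\<in>I <+> H. 0 \<le> l j"
    "\<forall>u. f u\<^sub>0 \<le> f u + (\<Sum>j\<in>I <+> H. l j * (a j \<bullet> u - \<beta> j))"
    by (auto simp flip: f_inner)
  show ?thesis
  proof (intro exI[of _ "l \<circ> Inl"] conjI ballI)
    fix u assume "u \<in> K"
    have "(\<Sum>h\<in>H. l (Inr h) * (aH h \<bullet> u - \<beta>H h)) \<le> 0"
      using l(1) \<open>u \<in> K\<close> K_iff by (intro sum_nonpos mult_nonneg_nonpos) auto
    moreover have "(\<Sum>i\<in>I. l (Inl i) * (a (Inl i) \<bullet> u - \<beta> (Inl i))) = (\<Sum>i\<in>I. l (Inl i) * (g i u - b i))"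
      by (auto simp: a_def \<beta>_def g_inner intro!: sum.cong)
    ultimately show "f u\<^sub>0 \<le> f u + (\<Sum>i\<in>I. (l \<circ> Inl) i * (g i u - b i))"
      using spec[OF l(2), of u] fin H by (simp add: sum.Plus a_def \<beta>_def)
  qed (use l(1) in auto)
qed

lemma polyhedron_linear_le:
  fixes L :: "'a::euclidean_space \<Rightarrow> real^'m"
  assumes "linear L"
  shows "polyhedron {u. L u \<le> b}"
proof -
  have lin: "linear (\<lambda>u. L u $ i)" for i
    using linear_compose[OF assms bounded_linear.linear[OF bounded_linear_vec_nth]] by (simp add: o_def)
  have "{u. L u \<le> b} = (\<Inter>i. {u. adjoint (\<lambda>u. L u $ i) 1 \<bullet> u \<le> b $ i})"
    using adjoint_works[OF lin] by (auto simp: less_eq_vec_def inner_commute)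
  then show ?thesis by (auto simp: polyhedron_halfspace_le)
qed

lemma polyhedron_linear_ge:
  fixes L :: "'a::euclidean_space \<Rightarrow> real^'m"
  assumes "linear L"
  shows "polyhedron {u. b \<le> L u}"
  using polyhedron_linear_le[OF linear_compose_neg[OF assms], of "- b"] by simp

section \<open>Conditional value-at-risk on a finite probability space\<close>

definition cvar_objective :: "real \<Rightarrow> ('i::finite \<Rightarrow> real) \<Rightarrow> ('i \<Rightarrow> real) \<Rightarrow> real \<Rightarrow> real" where
  "cvar_objective \<alpha> w V \<eta> = \<eta> + (1 / (1 - \<alpha>)) * (\<Sum>i\<in>UNIV. w i * max 0 (V i - \<eta>))"

definition cvar_envelope :: "real \<Rightarrow> ('i::finite \<Rightarrow> real) \<Rightarrow> (real^'i) set" where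
  "cvar_envelope \<alpha> w = {\<xi>. (\<forall>i. 0 \<le> \<xi> $ i \<and> \<xi> $ i \<le> w i / (1 - \<alpha>)) \<and> (\<Sum>i\<in>UNIV. \<xi> $ i) = 1}"

lemma cvar_eq_INF_objective: "cvar \<alpha> UNIV w V = (INF \<eta>. cvar_objective \<alpha> w V \<eta>)"
  by (simp add: cvar_def cvar_objective_def)

lemma envelope_le_cvar_objective:
  assumes "\<xi> \<in> cvar_envelope \<alpha> w" "\<alpha> < 1"
  shows "(\<Sum>i\<in>UNIV. \<xi> $ i * V i) \<le> cvar_objective \<alpha> w V \<eta>"
proof -
  have "(\<Sum>i\<in>UNIV. \<xi> $ i * V i) = (\<Sum>i\<in>UNIV. \<xi> $ i * (V i - \<eta>)) + \<eta> * (\<Sum>i\<in>UNIV. \<xi> $ i)"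
    by (simp add: algebra_simps sum.distrib sum_distrib_left sum_subtractf)
  also have "\<dots> \<le> (\<Sum>i\<in>UNIV. w i / (1 - \<alpha>) * max 0 (V i - \<eta>)) + \<eta>"
  proof -
    have "\<xi> $ i * (V i - \<eta>) \<le> w i / (1 - \<alpha>) * max 0 (V i - \<eta>)" for i
    proof -
      have "\<xi> $ i * (V i - \<eta>) \<le> \<xi> $ i * max 0 (V i - \<eta>)"
        using assms(1) by (intro mult_left_mono) (auto simp: cvar_envelope_def)
      also have "\<dots> \<le> w i / (1 - \<alpha>) * max 0 (V i - \<eta>)"
        using assms(1) by (intro mult_right_mono) (auto simp: cvar_envelope_def)
      finally show ?thesis .
    qed
    then show ?thesis using assms(1) by (auto simp: cvar_envelope_def intro: sum_mono)
  qed
  also have "\<dots> = cvar_objective \<alpha> w V \<eta>"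
    by (simp add: cvar_objective_def sum_distrib_left)
  finally show ?thesis .
qed

lemma weights_in_cvar_envelope:
  fixes w :: "'i::finite \<Rightarrow> real"
  assumes "0 \<le> \<alpha>" "\<alpha> < 1" "\<forall>i. 0 \<le> w i" "(\<Sum>i\<in>UNIV. w i) = 1"
  shows "(\<chi> i. w i) \<in> cvar_envelope \<alpha> w"
  using assms by (auto simp: cvar_envelope_def le_divide_eq mult_left_le)

lemma envelope_le_cvar:
  assumes "\<xi> \<in> cvar_envelope \<alpha> w" "\<alpha> < 1"
  shows "(\<Sum>i\<in>UNIV. \<xi> $ i * V i) \<le> cvar \<alpha> UNIV w V"
  unfolding cvar_eq_INF_objective by (rule cINF_greatest) (use envelope_le_cvar_objective[OF assms] in auto)

lemma cvar_le_objective: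
  fixes w V :: "'i::finite \<Rightarrow> real"
  assumes "0 \<le> \<alpha>" "\<alpha> < 1" "\<forall>i. 0 \<le> w i" "(\<Sum>i\<in>UNIV. w i) = 1"
  shows "cvar \<alpha> UNIV w V \<le> cvar_objective \<alpha> w V \<eta>"
proof -
  have "bdd_below (range (cvar_objective \<alpha> w V))"
    using envelope_le_cvar_objective[OF weights_in_cvar_envelope[OF assms] assms(2)] by (rule bdd_belowI2)
  then show ?thesis unfolding cvar_eq_INF_objective by (rule cINF_lower) simp
qed

lemma expectation_le_cvar:
  fixes w V :: "'i::finite \<Rightarrow> real"
  assumes "0 \<le> \<alpha>" "\<alpha> < 1" "\<forall>i. 0 \<le> w i" "(\<Sum>i\<in>UNIV. w i) = 1"
  shows "(\<Sum>i\<in>UNIV. w i * V i) \<le> cvar \<alpha> UNIV w V"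
  using envelope_le_cvar[OF weights_in_cvar_envelope[OF assms] assms(2)] by simp

lemma cvar_quantile_exists:
  fixes w V :: "'i::finite \<Rightarrow> real"
  assumes "0 \<le> \<alpha>" "\<alpha> < 1" "\<forall>i. 0 \<le> w i" "(\<Sum>i\<in>UNIV. w i) = 1"
  obtains \<eta> where "\<eta> \<in> range V" "1 - \<alpha> \<le> (\<Sum>i | \<eta> \<le> V i. w i)" "(\<Sum>i | \<eta> < V i. w i) \<le> 1 - \<alpha>"
proof -
  \<comment> \<open>the largest value of V whose upper tail still carries mass at least 1 - \<alpha>\<close>
  define S where "S = {t \<in> range V. 1 - \<alpha> \<le> (\<Sum>i | t \<le> V i. w i)}"
  have "{i. Min (range V) \<le> V i} = UNIV" by auto
  then have "1 - \<alpha> \<le> (\<Sum>i | Min (range V) \<le> V i. w i)" using assms by simp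
  moreover have "Min (range V) \<in> range V" by (rule Min_in) auto
  ultimately have "Min (range V) \<in> S" unfolding S_def by blast
  then have "S \<noteq> {}" by blast
  have "finite S" unfolding S_def by (rule finite_subset[of _ "range V"]) auto
  define \<eta> where "\<eta> = Max S"
  have "\<eta> \<in> S" using \<open>finite S\<close> \<open>S \<noteq> {}\<close> by (simp add: \<eta>_def)
  moreover have "(\<Sum>i | \<eta> < V i. w i) \<le> 1 - \<alpha>"
  proof (cases "{i. \<eta> < V i} = {}")
    case False
    define t where "t = Min (V ` {i. \<eta> < V i})"
    have "t \<in> V ` {i. \<eta> < V i}" using False by (simp add: t_def)
    then have "\<eta> < t" by auto
    have tail: "{i. t \<le> V i} = {i. \<eta> < V i}"
      using \<open>\<eta> < t\<close> by (auto simp: t_def)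
    show ?thesis
    proof (rule ccontr)
      assume "\<not> ?thesis"
      then have "t \<in> S" using \<open>t \<in> V ` {i. \<eta> < V i}\<close> tail by (auto simp: S_def)
      then have "t \<le> \<eta>" using \<open>finite S\<close> by (simp add: \<eta>_def)
      then show False using \<open>\<eta> < t\<close> by simp
    qed
  qed (use assms in simp)
  ultimately show ?thesis using that by (auto simp: S_def)
qed

lemma cvar_envelope_attains_objective:
  fixes w V :: "'i::finite \<Rightarrow> real"
  assumes "\<alpha> < 1" "\<forall>i. 0 \<le> w i"
    and upper: "1 - \<alpha> \<le> (\<Sum>i | \<eta> \<le> V i. w i)" and lower: "(\<Sum>i | \<eta> < V i. w i) \<le> 1 - \<alpha>"
  obtains \<xi> where "\<xi> \<in> cvar_envelope \<alpha> w" "(\<Sum>i\<in>UNIV. \<xi> $ i * V i) = cvar_objective \<alpha> w V \<eta>"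
proof -
  define sA where "sA = (\<Sum>i | \<eta> < V i. w i)"
  define sB where "sB = (\<Sum>i | V i = \<eta>. w i)"
  have tail: "{i. \<eta> \<le> V i} = {i. \<eta> < V i} \<union> {i. V i = \<eta>}" by auto
  have sAB: "(\<Sum>i | \<eta> \<le> V i. w i) = sA + sB"
    unfolding sA_def sB_def tail by (rule sum.union_disjoint) auto
  \<comment> \<open>the atom at \<eta> is only partially loaded, with fraction \<theta>, so that the total mass is 1\<close>
  define \<theta> where "\<theta> = (if sB = 0 then 0 else (1 - \<alpha> - sA) / sB)"
  have "0 \<le> sB" using assms(2) by (simp add: sB_def sum_nonneg)
  then have \<theta>: "0 \<le> \<theta>" "\<theta> \<le> 1" "sA + \<theta> * sB = 1 - \<alpha>"
    using upper lower sAB by (auto simp: \<theta>_def sA_def field_simps)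
  define \<xi> where "\<xi> = (\<chi> i. (if \<eta> < V i then 1 else if V i = \<eta> then \<theta> else 0) * w i / (1 - \<alpha>))"
  have "\<xi> \<in> cvar_envelope \<alpha> w"
  proof -
    have "0 \<le> \<xi> $ i \<and> \<xi> $ i \<le> w i / (1 - \<alpha>)" for i
      using \<theta> assms by (auto simp: \<xi>_def divide_le_cancel intro: mult_left_le_one_le)
    moreover have "(\<Sum>i\<in>UNIV. \<xi> $ i) = (sA + \<theta> * sB) / (1 - \<alpha>)"
    proof -
      have "(\<Sum>i\<in>UNIV. \<xi> $ i) = (\<Sum>i\<in>{i. \<eta> < V i} \<union> {i. V i = \<eta>}. \<xi> $ i)"
        by (rule sum.mono_neutral_right) (auto simp: \<xi>_def)
      also have "\<dots> = (\<Sum>i | \<eta> < V i. w i / (1 - \<alpha>)) + (\<Sum>i | V i = \<eta>. \<theta> * w i / (1 - \<alpha>))"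
        by (subst sum.union_disjoint) (auto simp: \<xi>_def intro!: arg_cong2[where f = "(+)"] sum.cong)
      finally show ?thesis
        by (simp add: sA_def sB_def sum_divide_distrib sum_distrib_left add_divide_distrib)
    qed
    ultimately show ?thesis using \<theta>(3) assms(1) by (simp add: cvar_envelope_def)
  qed
  moreover have "(\<Sum>i\<in>UNIV. \<xi> $ i * V i) = cvar_objective \<alpha> w V \<eta>"
  proof -
    have "\<xi> $ i * (V i - \<eta>) = w i * max 0 (V i - \<eta>) / (1 - \<alpha>)" for i
      by (auto simp: \<xi>_def max_def)
    then have "(\<Sum>i\<in>UNIV. \<xi> $ i * (V i - \<eta>)) = (1 / (1 - \<alpha>)) * (\<Sum>i\<in>UNIV. w i * max 0 (V i - \<eta>))"
      by (simp add: sum_divide_distrib)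
    moreover have "(\<Sum>i\<in>UNIV. \<xi> $ i * V i) = (\<Sum>i\<in>UNIV. \<xi> $ i * (V i - \<eta>)) + \<eta> * (\<Sum>i\<in>UNIV. \<xi> $ i)"
      by (simp add: algebra_simps sum.distrib sum_distrib_left sum_subtractf)
    ultimately show ?thesis
      using \<open>\<xi> \<in> cvar_envelope \<alpha> w\<close> by (simp add: cvar_objective_def cvar_envelope_def)
  qed
  ultimately show ?thesis using that by blast
qed

lemma cvar_attained:
  fixes w V :: "'i::finite \<Rightarrow> real"
  assumes "0 \<le> \<alpha>" "\<alpha> < 1" "\<forall>i. 0 \<le> w i" "(\<Sum>i\<in>UNIV. w i) = 1"
  obtains \<eta> \<xi> where "\<eta> \<in> range V" "cvar \<alpha> UNIV w V = cvar_objective \<alpha> w V \<eta>"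
    "\<xi> \<in> cvar_envelope \<alpha> w" "(\<Sum>i\<in>UNIV. \<xi> $ i * V i) = cvar \<alpha> UNIV w V"
proof -
  obtain \<eta> where \<eta>: "\<eta> \<in> range V" "1 - \<alpha> \<le> (\<Sum>i | \<eta> \<le> V i. w i)" "(\<Sum>i | \<eta> < V i. w i) \<le> 1 - \<alpha>"
    using cvar_quantile_exists[OF assms] by blast
  obtain \<xi> where \<xi>: "\<xi> \<in> cvar_envelope \<alpha> w" "(\<Sum>i\<in>UNIV. \<xi> $ i * V i) = cvar_objective \<alpha> w V \<eta>"
    using cvar_envelope_attains_objective[OF assms(2,3) \<eta>(2,3)] by blast
  have "cvar \<alpha> UNIV w V = cvar_objective \<alpha> w V \<eta>"
    using envelope_le_cvar[OF \<xi>(1) assms(2), of V] cvar_le_objective[OF assms, of V \<eta>] \<xi>(2) by linarith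
  with \<eta>(1) \<xi> that show ?thesis by simp
qed

lemma polytope_cvar_envelope: "polytope (cvar_envelope \<alpha> w)"
proof -
  have "cvar_envelope \<alpha> w = cbox 0 (\<chi> i. w i / (1 - \<alpha>)) \<inter> {\<xi>. (\<chi> i. 1) \<bullet> \<xi> = 1}"
    by (auto simp: cvar_envelope_def mem_box_cart inner_vec_def)
  then show ?thesis
    by (simp add: polytope_Int_polyhedron polytope_interval polyhedron_hyperplane)
qed

lemma cvar_le_iff_vertices:
  fixes w :: "'i::finite \<Rightarrow> real"
  assumes "0 \<le> \<alpha>" "\<alpha> < 1" "\<forall>i. 0 \<le> w i" "(\<Sum>i\<in>UNIV. w i) = 1"
  obtains \<Xi> where "finite \<Xi>"
    "\<And>V t. cvar \<alpha> UNIV w V \<le> t \<longleftrightarrow> (\<forall>\<xi>\<in>\<Xi>. (\<Sum>i\<in>UNIV. \<xi> $ i * V i) \<le> t)"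
proof -
  obtain \<Xi> where \<Xi>: "finite \<Xi>" "cvar_envelope \<alpha> w = convex hull \<Xi>"
    using polytope_cvar_envelope unfolding polytope_def by blast
  have "cvar \<alpha> UNIV w V \<le> t \<longleftrightarrow> (\<forall>\<xi>\<in>\<Xi>. (\<Sum>i\<in>UNIV. \<xi> $ i * V i) \<le> t)" for V t
  proof
    assume "cvar \<alpha> UNIV w V \<le> t"
    moreover have "\<Xi> \<subseteq> cvar_envelope \<alpha> w" using \<Xi>(2) by (simp add: hull_subset)
    ultimately show "\<forall>\<xi>\<in>\<Xi>. (\<Sum>i\<in>UNIV. \<xi> $ i * V i) \<le> t"
      using envelope_le_cvar[OF _ assms(2), of _ w V] by fastforce
  next
    assume vertices: "\<forall>\<xi>\<in>\<Xi>. (\<Sum>i\<in>UNIV. \<xi> $ i * V i) \<le> t"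
    have "convex hull \<Xi> \<subseteq> {\<xi>. (\<chi> i. V i) \<bullet> \<xi> \<le> t}"
    proof (rule hull_minimal)
      show "\<Xi> \<subseteq> {\<xi>. (\<chi> i. V i) \<bullet> \<xi> \<le> t}"
        using vertices by (auto simp: inner_vec_def mult.commute)
    qed (rule convex_halfspace_le)
    moreover obtain \<xi> where "\<xi> \<in> cvar_envelope \<alpha> w" "(\<Sum>i\<in>UNIV. \<xi> $ i * V i) = cvar \<alpha> UNIV w V"
      using cvar_attained[OF assms] by metis
    ultimately show "cvar \<alpha> UNIV w V \<le> t" using \<Xi>(2) by (auto simp: inner_vec_def mult.commute)
  qed
  with \<Xi>(1) that show ?thesis by blast
qed

section \<open>Finitely many constraints suffice for CVaR dominance over a polytope\<close>

lemma cvar_le_lifted_objective: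
  fixes w V :: "'k::finite \<Rightarrow> real"
  assumes "0 \<le> \<alpha>" "\<alpha> < 1" "\<forall>k. 0 \<le> w k" "(\<Sum>k\<in>UNIV. w k) = 1"
    and "\<forall>k. 0 \<le> u $ k \<and> V k - \<eta> \<le> u $ k"
  shows "cvar \<alpha> UNIV w V \<le> \<eta> + (1 / (1 - \<alpha>)) * (\<Sum>k\<in>UNIV. w k * u $ k)"
proof -
  have "(\<Sum>k\<in>UNIV. w k * max 0 (V k - \<eta>)) \<le> (\<Sum>k\<in>UNIV. w k * u $ k)"
    using assms by (intro sum_mono mult_left_mono) auto
  then have "cvar_objective \<alpha> w V \<eta> \<le> \<eta> + (1 / (1 - \<alpha>)) * (\<Sum>k\<in>UNIV. w k * u $ k)"
    using assms(2) by (simp add: cvar_objective_def divide_right_mono)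
  then show ?thesis using cvar_le_objective[OF assms(1-4)] by (rule order_trans[rotated])
qed

definition cvar_lifting :: "'a::real_inner set \<Rightarrow> ('k::finite \<Rightarrow> 'a) \<Rightarrow> real \<Rightarrow> ('a \<times> real \<times> (real^'k)) set"
  where "cvar_lifting C z M =
    {(c, \<eta>, u). c \<in> C \<and> \<bar>\<eta>\<bar> \<le> M \<and> (\<forall>k. 0 \<le> u $ k \<and> u $ k \<le> 2 * M \<and> c \<bullet> z k - \<eta> \<le> u $ k)}"

lemma polytope_cvar_lifting:
  fixes C :: "'a::euclidean_space set" and z :: "'k::finite \<Rightarrow> 'a"
  assumes "polytope C"
  shows "polytope (cvar_lifting C z M)"
proof -
  have halfspace: "{e. (z k, -1, - axis k 1) \<bullet> e \<le> 0} = {(c, \<eta>, u). c \<bullet> z k - \<eta> \<le> u $ k}" for k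
    by (auto simp: inner_axis' inner_commute[of "z k"])
  have lifting_eq: "cvar_lifting C z M = (C \<times> cbox (-M) M \<times> cbox 0 (\<chi> k. 2 * M)) \<inter>
      (\<Inter>k. {e. (z k, -1, - axis k 1) \<bullet> e \<le> 0})"
    unfolding halfspace by (auto simp: cvar_lifting_def mem_box_cart abs_le_iff)
  have "polyhedron (\<Inter>k. {e. (z k, -1::real, - axis k (1::real)) \<bullet> e \<le> 0})"
    by (intro polyhedron_Inter) (auto simp: polyhedron_halfspace_le)
  moreover have "polytope (C \<times> cbox (-M) M \<times> cbox 0 (\<chi> k. 2 * M))"
    by (intro polytope_Times polytope_interval assms)
  ultimately show ?thesis unfolding lifting_eq by (intro polytope_Int_polyhedron)
qed

lemma cvar_attained_in_lifting:
  fixes z :: "'k::finite \<Rightarrow> 'a::real_inner"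
  assumes "0 \<le> \<alpha>" "\<alpha> < 1" "\<forall>k. 0 \<le> w k" "(\<Sum>k\<in>UNIV. w k) = 1"
    and "c \<in> C" "\<forall>k. \<bar>c \<bullet> z k\<bar> \<le> M"
  obtains \<eta> u where "(c, \<eta>, u) \<in> cvar_lifting C z M"
    "cvar \<alpha> UNIV w (\<lambda>k. c \<bullet> z k) = \<eta> + (1 / (1 - \<alpha>)) * (\<Sum>k\<in>UNIV. w k * u $ k)"
proof -
  obtain \<eta> where \<eta>: "\<eta> \<in> range (\<lambda>k. c \<bullet> z k)"
    "cvar \<alpha> UNIV w (\<lambda>k. c \<bullet> z k) = cvar_objective \<alpha> w (\<lambda>k. c \<bullet> z k) \<eta>"
    using cvar_attained[OF assms(1-4)] by metis
  define u where "u = (\<chi> k. max 0 (c \<bullet> z k - \<eta>))"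
  have "\<bar>\<eta>\<bar> \<le> M" using \<eta>(1) assms(6) by auto
  moreover have "c \<bullet> z k - \<eta> \<le> 2 * M" for k
    using spec[OF assms(6), of k] \<open>\<bar>\<eta>\<bar> \<le> M\<close> by (simp add: abs_le_iff)
  ultimately have "(c, \<eta>, u) \<in> cvar_lifting C z M"
    using assms(5,6) by (auto simp: cvar_lifting_def u_def)
  moreover have "cvar \<alpha> UNIV w (\<lambda>k. c \<bullet> z k) = \<eta> + (1 / (1 - \<alpha>)) * (\<Sum>k\<in>UNIV. w k * u $ k)"
    using \<eta>(2) by (simp add: u_def cvar_objective_def)
  ultimately show ?thesis using that by blast
qed

lemma cvar_dominance_finite_reduction:
  fixes C :: "'a::euclidean_space set" and z :: "'k::finite \<Rightarrow> 'a" and w :: "'k \<Rightarrow> real"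
  assumes cvar_ok: "0 \<le> \<alpha>" "\<alpha> < 1" "\<forall>k. 0 \<le> w k" "(\<Sum>k\<in>UNIV. w k) = 1"
    and "polytope C"
  obtains C0 where "finite C0" "C0 \<subseteq> C"
    "\<And>a. \<forall>c\<in>C0. a \<bullet> c \<le> cvar \<alpha> UNIV w (\<lambda>k. c \<bullet> z k) \<Longrightarrow>
          \<forall>c\<in>C. a \<bullet> c \<le> cvar \<alpha> UNIV w (\<lambda>k. c \<bullet> z k)"
proof -
  obtain B where "B > 0" "\<forall>c\<in>C. norm c \<le> B"
    using polytope_imp_bounded[OF \<open>polytope C\<close>] bounded_pos by metis
  define M where "M = B * (\<Sum>k\<in>UNIV. norm (z k))"
  have M: "\<forall>k. \<bar>c \<bullet> z k\<bar> \<le> M" if "c \<in> C" for c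
  proof
    fix k
    have "\<bar>c \<bullet> z k\<bar> \<le> B * norm (z k)"
      using Cauchy_Schwarz_ineq2[of c "z k"] \<open>\<forall>c\<in>C. norm c \<le> B\<close> that
      by (meson mult_right_mono norm_ge_zero order_trans)
    also have "\<dots> \<le> M"
      unfolding M_def using \<open>B > 0\<close> by (intro mult_left_mono member_le_sum) auto
    finally show "\<bar>c \<bullet> z k\<bar> \<le> M" .
  qed
  obtain V where V: "finite V" "cvar_lifting C z M = convex hull V"
    using polytope_cvar_lifting[OF \<open>polytope C\<close>] unfolding polytope_def by blast
  have V_lifting: "V \<subseteq> cvar_lifting C z M" using V(2) by (simp add: hull_subset)
  show ?thesis
  proof
    show "finite (fst ` V)" using V(1) by simp
    show "fst ` V \<subseteq> C" using V_lifting by (auto simp: cvar_lifting_def)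
  next
    fix a assume C0: "\<forall>c\<in>fst ` V. a \<bullet> c \<le> cvar \<alpha> UNIV w (\<lambda>k. c \<bullet> z k)"
    define h where "h = (a, -1 :: real, - (\<chi> k. w k / (1 - \<alpha>)))"
    have h_inner: "h \<bullet> (c, \<eta>, u) = a \<bullet> c - (\<eta> + (1 / (1 - \<alpha>)) * (\<Sum>k\<in>UNIV. w k * u $ k))" for c \<eta> u
      by (simp add: h_def inner_vec_def sum_distrib_left sum_negf)
    have "V \<subseteq> {e. h \<bullet> e \<le> 0}"
    proof clarify
      fix c \<eta> u assume "(c, \<eta>, u) \<in> V"
      then have "a \<bullet> c \<le> cvar \<alpha> UNIV w (\<lambda>k. c \<bullet> z k)"
        "cvar \<alpha> UNIV w (\<lambda>k. c \<bullet> z k) \<le> \<eta> + (1 / (1 - \<alpha>)) * (\<Sum>k\<in>UNIV. w k * u $ k)"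
        using C0 V_lifting cvar_le_lifted_objective[OF cvar_ok] by (force simp: cvar_lifting_def)+
      then show "h \<bullet> (c, \<eta>, u) \<le> 0" by (simp add: h_inner)
    qed
    then have lifting_le: "cvar_lifting C z M \<subseteq> {e. h \<bullet> e \<le> 0}"
      unfolding V(2) by (rule hull_minimal) (rule convex_halfspace_le)
    show "\<forall>c\<in>C. a \<bullet> c \<le> cvar \<alpha> UNIV w (\<lambda>k. c \<bullet> z k)"
    proof
      fix c assume "c \<in> C"
      obtain \<eta> u where "(c, \<eta>, u) \<in> cvar_lifting C z M"
        "cvar \<alpha> UNIV w (\<lambda>k. c \<bullet> z k) = \<eta> + (1 / (1 - \<alpha>)) * (\<Sum>k\<in>UNIV. w k * u $ k)"
        using cvar_attained_in_lifting[OF cvar_ok \<open>c \<in> C\<close> M[OF \<open>c \<in> C\<close>]] by blast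
      with lifting_le show "a \<bullet> c \<le> cvar \<alpha> UNIV w (\<lambda>k. c \<bullet> z k)"
        by (force simp: h_inner)
    qed
  qed
qed

lemma cvar_dominance_finite_linear_system:
  fixes C :: "'a::euclidean_space set" and z :: "'k::finite \<Rightarrow> 'a"
    and w :: "'k \<Rightarrow> real" and p :: "'s::finite \<Rightarrow> real"
  assumes \<alpha>: "0 \<le> \<alpha>" "\<alpha> < 1"
    and p: "\<forall>s. 0 \<le> p s" "(\<Sum>s\<in>UNIV. p s) = 1" and w: "\<forall>k. 0 \<le> w k" "(\<Sum>k\<in>UNIV. w k) = 1"
    and "polytope C"
  obtains C0 \<Xi> where "finite C0" "C0 \<subseteq> C" "finite \<Xi>"
    "\<And>V \<xi>. \<xi> \<in> \<Xi> \<Longrightarrow> (\<Sum>s\<in>UNIV. \<xi> $ s * V s) \<le> cvar \<alpha> UNIV p V"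
    "\<And>G. (\<forall>c\<in>C. cvar \<alpha> UNIV p (\<lambda>s. c \<bullet> G s) \<le> cvar \<alpha> UNIV w (\<lambda>k. c \<bullet> z k)) \<longleftrightarrow>
       (\<forall>i\<in>C0 \<times> \<Xi>. (\<Sum>s\<in>UNIV. snd i $ s * (fst i \<bullet> G s)) \<le> cvar \<alpha> UNIV w (\<lambda>k. fst i \<bullet> z k))"
proof -
  obtain \<Xi> where "finite \<Xi>" and vertices:
    "\<And>V t. cvar \<alpha> UNIV p V \<le> t \<longleftrightarrow> (\<forall>\<xi>\<in>\<Xi>. (\<Sum>s\<in>UNIV. \<xi> $ s * V s) \<le> t)"
    using cvar_le_iff_vertices[OF \<alpha> p] by blast
  obtain C0 where C0: "finite C0" "C0 \<subseteq> C" and reduction: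
    "\<And>a. \<forall>c\<in>C0. a \<bullet> c \<le> cvar \<alpha> UNIV w (\<lambda>k. c \<bullet> z k) \<Longrightarrow>
          \<forall>c\<in>C. a \<bullet> c \<le> cvar \<alpha> UNIV w (\<lambda>k. c \<bullet> z k)"
    using cvar_dominance_finite_reduction[OF \<alpha> w \<open>polytope C\<close>] by blast
  have dominance: "(\<forall>c\<in>C. cvar \<alpha> UNIV p (\<lambda>s. c \<bullet> G s) \<le> cvar \<alpha> UNIV w (\<lambda>k. c \<bullet> z k)) \<longleftrightarrow>
       (\<forall>i\<in>C0 \<times> \<Xi>. (\<Sum>s\<in>UNIV. snd i $ s * (fst i \<bullet> G s)) \<le> cvar \<alpha> UNIV w (\<lambda>k. fst i \<bullet> z k))" for G
  proof
    assume "\<forall>i\<in>C0 \<times> \<Xi>. (\<Sum>s\<in>UNIV. snd i $ s * (fst i \<bullet> G s)) \<le> cvar \<alpha> UNIV w (\<lambda>k. fst i \<bullet> z k)"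
    \<comment> \<open>for fixed \<xi> the constraint is linear in c, with coefficient vector \<Sum>s. \<xi> $ s *R G s\<close>
    then have "\<forall>c\<in>C. (\<Sum>s\<in>UNIV. \<xi> $ s *\<^sub>R G s) \<bullet> c \<le> cvar \<alpha> UNIV w (\<lambda>k. c \<bullet> z k)" if "\<xi> \<in> \<Xi>" for \<xi>
      using that by (intro reduction) (auto simp: inner_sum_left inner_commute[of "G _"])
    then show "\<forall>c\<in>C. cvar \<alpha> UNIV p (\<lambda>s. c \<bullet> G s) \<le> cvar \<alpha> UNIV w (\<lambda>k. c \<bullet> z k)"
      unfolding vertices by (auto simp: inner_sum_left inner_commute[of "G _"])
  qed (use C0(2) vertices in fastforce)
  have below: "(\<Sum>s\<in>UNIV. \<xi> $ s * V s) \<le> cvar \<alpha> UNIV p V" if "\<xi> \<in> \<Xi>" for V \<xi>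
    using that vertices[of V "cvar \<alpha> UNIV p V"] by blast
  show ?thesis by (rule that[OF C0 \<open>finite \<Xi>\<close> below dominance])
qed

section \<open>Lagrangian duality with finitely supported multipliers\<close>

lemma fint_eq_sum_superset:
  assumes "finite S" "{c. \<mu> c \<noteq> 0} \<subseteq> S"
  shows "fint \<mu> u = (\<Sum>c\<in>S. u c * \<mu> c)"
  unfolding fint_def by (rule sum.mono_neutral_left) (use assms in auto)

lemma fint_mono:
  assumes "\<mu> \<in> MFplus C" "\<And>c. c \<in> C \<Longrightarrow> u c \<le> v c"
  shows "fint \<mu> u \<le> fint \<mu> v"
  unfolding fint_def using assms by (auto simp: MFplus_def intro!: sum_mono mult_right_mono)

lemma aggregate_multipliers:
  fixes l g :: "'c \<times> 'x \<Rightarrow> real"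
  assumes "finite C0" "C0 \<subseteq> C" "finite \<Xi>" "\<forall>i\<in>C0 \<times> \<Xi>. 0 \<le> l i"
  obtains \<mu> where "\<mu> \<in> MFplus C"
    "\<And>g G Z. (\<And>i. i \<in> C0 \<times> \<Xi> \<Longrightarrow> g i \<le> G (fst i)) \<Longrightarrow>
        (\<Sum>i\<in>C0 \<times> \<Xi>. l i * (g i - Z (fst i))) \<le> fint \<mu> G - fint \<mu> Z"
proof
  define \<mu> where "\<mu> c = (if c \<in> C0 then \<Sum>\<xi>\<in>\<Xi>. l (c, \<xi>) else 0)" for c
  have supp: "{c. \<mu> c \<noteq> 0} \<subseteq> C0" by (auto simp: \<mu>_def)
  show "\<mu> \<in> MFplus C"
    using assms supp by (auto simp: MFplus_def \<mu>_def intro: sum_nonneg finite_subset)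
  fix g :: "'c \<times> 'x \<Rightarrow> real" and G Z :: "'c \<Rightarrow> real"
  assume dominated: "\<And>i. i \<in> C0 \<times> \<Xi> \<Longrightarrow> g i \<le> G (fst i)"
  have "(\<Sum>i\<in>C0 \<times> \<Xi>. l i * (g i - Z (fst i))) \<le> (\<Sum>i\<in>C0 \<times> \<Xi>. l i * (G (fst i) - Z (fst i)))"
    using assms(4) dominated by (intro sum_mono mult_left_mono) auto
  also have "\<dots> = (\<Sum>c\<in>C0. \<mu> c * (G c - Z c))"
    by (simp add: sum.cartesian_product' \<mu>_def sum_distrib_right)
  also have "\<dots> = fint \<mu> G - fint \<mu> Z"
    using fint_eq_sum_superset[OF assms(1) supp]
    by (simp add: algebra_simps sum_subtractf)
  finally show "(\<Sum>i\<in>C0 \<times> \<Xi>. l i * (g i - Z (fst i))) \<le> fint \<mu> G - fint \<mu> Z" .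
qed

lemma linear_fint:
  assumes "\<And>c. linear (f c)"
  shows "linear (\<lambda>u. fint \<mu> (\<lambda>c. f c u))"
  by (rule linearI)
    (simp_all add: fint_def linear_add[OF assms] linear_scale[OF assms] sum.distrib
      sum_distrib_left algebra_simps)

lemma lagrangian_saddle_point_duality:
  fixes obj :: "'x \<Rightarrow> 'y \<Rightarrow> real" and lhs :: "'m \<Rightarrow> 'x \<Rightarrow> 'y \<Rightarrow> real" and rhs :: "'m \<Rightarrow> real"
  assumes "P \<subseteq> F"
    and constraint: "\<And>x y \<mu>. (x, y) \<in> P \<Longrightarrow> \<mu> \<in> M \<Longrightarrow> lhs \<mu> x y \<le> rhs \<mu>"
    and L_def: "\<And>x y \<mu>. L x y \<mu> = obj x y + lhs \<mu> x y - rhs \<mu>"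
    and dual_def: "\<And>\<mu>. dual \<mu> = (INF (x, y)\<in>F. L x y \<mu>)"
    and bdd: "\<And>\<mu>. \<mu> \<in> M \<Longrightarrow> bdd_below ((\<lambda>(x, y). L x y \<mu>) ` F)"
    and saddle: "(x0, y0) \<in> P" "\<mu>0 \<in> M" "\<And>x y. (x, y) \<in> F \<Longrightarrow> obj x0 y0 \<le> L x y \<mu>0"
  shows "(\<exists>\<mu>s\<in>M. (\<forall>\<mu>\<in>M. dual \<mu> \<le> dual \<mu>s) \<and>
             (\<forall>(x, y)\<in>P. (\<forall>(x', y')\<in>P. obj x y \<le> obj x' y') \<longrightarrow> dual \<mu>s = obj x y))
       \<and> (\<forall>xs ys \<mu>s. (xs, ys) \<in> P \<longrightarrow> \<mu>s \<in> M \<longrightarrow>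
            (((\<forall>(x', y')\<in>P. obj xs ys \<le> obj x' y') \<and> (\<forall>\<mu>\<in>M. dual \<mu> \<le> dual \<mu>s))
             \<longleftrightarrow> (lhs \<mu>s xs ys = rhs \<mu>s \<and> (\<forall>(x, y)\<in>F. L xs ys \<mu>s \<le> L x y \<mu>s))))"
proof -
  have dual_le_L: "dual \<mu> \<le> L x y \<mu>" if "\<mu> \<in> M" "(x, y) \<in> F" for \<mu> x y
    using cINF_lower[OF bdd[OF that(1)] that(2)] by (simp add: dual_def)
  have dual_ge: "t \<le> dual \<mu>" if "\<And>x y. (x, y) \<in> F \<Longrightarrow> t \<le> L x y \<mu>" for \<mu> t
    unfolding dual_def using saddle(1) \<open>P \<subseteq> F\<close> that by (intro cINF_greatest) auto
  have weak_duality: "dual \<mu> \<le> obj x y" if "\<mu> \<in> M" "(x, y) \<in> P" for \<mu> x y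
    using dual_le_L[OF that(1)] constraint[OF that(2,1)] that(2) \<open>P \<subseteq> F\<close> L_def by fastforce
  have dual_\<mu>0: "dual \<mu>0 = obj x0 y0"
    using weak_duality[OF saddle(2,1)] dual_ge[OF saddle(3)] by simp
  have primal_opt: "obj x y = obj x0 y0" if "(x, y) \<in> P" "\<forall>(x', y')\<in>P. obj x y \<le> obj x' y'" for x y
    using that saddle(1) weak_duality[OF saddle(2)] dual_\<mu>0 by fastforce
  have "(\<forall>\<mu>\<in>M. dual \<mu> \<le> dual \<mu>0) \<and>
      (\<forall>(x, y)\<in>P. (\<forall>(x', y')\<in>P. obj x y \<le> obj x' y') \<longrightarrow> dual \<mu>0 = obj x y)"
    using weak_duality[OF _ saddle(1)] primal_opt dual_\<mu>0 by auto
  moreover have "((\<forall>(x', y')\<in>P. obj xs ys \<le> obj x' y') \<and> (\<forall>\<mu>\<in>M. dual \<mu> \<le> dual \<nu>))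
      \<longleftrightarrow> (lhs \<nu> xs ys = rhs \<nu> \<and> (\<forall>(x, y)\<in>F. L xs ys \<nu> \<le> L x y \<nu>))"
    if "(xs, ys) \<in> P" "\<nu> \<in> M" for xs ys \<nu>
  proof
    assume opt: "(\<forall>(x', y')\<in>P. obj xs ys \<le> obj x' y') \<and> (\<forall>\<mu>\<in>M. dual \<mu> \<le> dual \<nu>)"
    \<comment> \<open>no duality gap: obj xs ys = dual \<nu> \<le> L xs ys \<nu> \<le> obj xs ys\<close>
    then have "dual \<nu> = obj xs ys"
      using primal_opt[OF that(1)] weak_duality[OF that(2,1)] saddle(2) dual_\<mu>0 by fastforce
    moreover have "dual \<nu> \<le> L xs ys \<nu>" using dual_le_L that \<open>P \<subseteq> F\<close> by blast
    ultimately have "lhs \<nu> xs ys = rhs \<nu>" using constraint[OF that] L_def by fastforce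
    moreover have "L xs ys \<nu> \<le> L x y \<nu>" if "(x, y) \<in> F" for x y
      using dual_le_L[OF \<open>\<nu> \<in> M\<close> that] \<open>dual \<nu> = obj xs ys\<close> \<open>lhs \<nu> xs ys = rhs \<nu>\<close> L_def by simp
    ultimately show "lhs \<nu> xs ys = rhs \<nu> \<and> (\<forall>(x, y)\<in>F. L xs ys \<nu> \<le> L x y \<nu>)" by blast
  next
    assume "lhs \<nu> xs ys = rhs \<nu> \<and> (\<forall>(x, y)\<in>F. L xs ys \<nu> \<le> L x y \<nu>)"
    then have "obj xs ys \<le> dual \<nu>" using dual_ge[of "obj xs ys" \<nu>] L_def by fastforce
    then show "(\<forall>(x', y')\<in>P. obj xs ys \<le> obj x' y') \<and> (\<forall>\<mu>\<in>M. dual \<mu> \<le> dual \<nu>)"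
      using weak_duality[OF \<open>\<nu> \<in> M\<close>] weak_duality[OF _ that(1)] by fastforce
  qed
  ultimately show ?thesis using saddle(2) by blast
qed

lemma cvar_dominance_lp_saddle_point:
  fixes K :: "'u::euclidean_space set" and G :: "'u \<Rightarrow> 's::finite \<Rightarrow> 'a::euclidean_space"
    and z :: "'k::finite \<Rightarrow> 'a" and ob :: "'u \<Rightarrow> real"
  assumes \<alpha>: "0 \<le> \<alpha>" "\<alpha> < 1"
    and p: "\<forall>s. 0 \<le> p s" "(\<Sum>s\<in>UNIV. p s) = 1" and w: "\<forall>k. 0 \<le> w k" "(\<Sum>k\<in>UNIV. w k) = 1"
    and "polytope C" "polyhedron K" "linear ob" and lin_G: "\<And>s. linear (\<lambda>u. G u s)"
    and feasible: "u\<^sub>0 \<in> K" "\<forall>c\<in>C. cvar \<alpha> UNIV p (\<lambda>s. c \<bullet> G u\<^sub>0 s) \<le> cvar \<alpha> UNIV w (\<lambda>k. c \<bullet> z k)"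
    and optimal: "\<And>u. u \<in> K \<Longrightarrow> \<forall>c\<in>C. cvar \<alpha> UNIV p (\<lambda>s. c \<bullet> G u s) \<le> cvar \<alpha> UNIV w (\<lambda>k. c \<bullet> z k)
                    \<Longrightarrow> ob u\<^sub>0 \<le> ob u"
  obtains \<mu> where "\<mu> \<in> MFplus C"
    "\<And>u. u \<in> K \<Longrightarrow> ob u\<^sub>0 \<le> ob u + fint \<mu> (\<lambda>c. cvar \<alpha> UNIV p (\<lambda>s. c \<bullet> G u s))
                                   - fint \<mu> (\<lambda>c. cvar \<alpha> UNIV w (\<lambda>k. c \<bullet> z k))"
proof -
  obtain C0 \<Xi> where C0: "finite C0" "C0 \<subseteq> C" and "finite \<Xi>"
    and below: "\<And>V \<xi>. \<xi> \<in> \<Xi> \<Longrightarrow> (\<Sum>s\<in>UNIV. \<xi> $ s * V s) \<le> cvar \<alpha> UNIV p V"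
    and dominance: "\<And>G. (\<forall>c\<in>C. cvar \<alpha> UNIV p (\<lambda>s. c \<bullet> G s) \<le> cvar \<alpha> UNIV w (\<lambda>k. c \<bullet> z k)) \<longleftrightarrow>
       (\<forall>i\<in>C0 \<times> \<Xi>. (\<Sum>s\<in>UNIV. snd i $ s * (fst i \<bullet> G s)) \<le> cvar \<alpha> UNIV w (\<lambda>k. fst i \<bullet> z k))"
    using cvar_dominance_finite_linear_system[OF \<alpha> p w \<open>polytope C\<close>] by blast
  define g where "g i u = (\<Sum>s\<in>UNIV. snd i $ s * (fst i \<bullet> G u s))" for i :: "'a \<times> (real^'s)" and u
  have lin_g: "linear (g i)" for i
    by (rule linearI) (simp_all add: g_def linear_add[OF lin_G] linear_scale[OF lin_G]
        inner_add_right sum.distrib sum_distrib_left algebra_simps)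
  have "\<exists>l. (\<forall>i\<in>C0 \<times> \<Xi>. 0 \<le> l i) \<and>
      (\<forall>u\<in>K. ob u\<^sub>0 \<le> ob u + (\<Sum>i\<in>C0 \<times> \<Xi>. l i * (g i u - cvar \<alpha> UNIV w (\<lambda>k. fst i \<bullet> z k))))"
  proof (rule lp_lagrange_multipliers_polyhedron[OF \<open>polyhedron K\<close> _ lin_g \<open>linear ob\<close> feasible(1)])
    show "finite (C0 \<times> \<Xi>)" using \<open>finite C0\<close> \<open>finite \<Xi>\<close> by simp
    show "\<forall>i\<in>C0 \<times> \<Xi>. g i u\<^sub>0 \<le> cvar \<alpha> UNIV w (\<lambda>k. fst i \<bullet> z k)"
      using feasible(2) dominance unfolding g_def by blast
    show "ob u\<^sub>0 \<le> ob u" if "u \<in> K" "\<forall>i\<in>C0 \<times> \<Xi>. g i u \<le> cvar \<alpha> UNIV w (\<lambda>k. fst i \<bullet> z k)" for u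
      using optimal[OF that(1)] that(2) dominance unfolding g_def by blast
  qed
  then obtain l where l: "\<forall>i\<in>C0 \<times> \<Xi>. 0 \<le> l i"
    "\<And>u. u \<in> K \<Longrightarrow> ob u\<^sub>0 \<le> ob u + (\<Sum>i\<in>C0 \<times> \<Xi>. l i * (g i u - cvar \<alpha> UNIV w (\<lambda>k. fst i \<bullet> z k)))"
    by blast
  obtain \<mu> where "\<mu> \<in> MFplus C" and aggregated:
    "\<And>g' V Z. (\<And>i. i \<in> C0 \<times> \<Xi> \<Longrightarrow> g' i \<le> V (fst i)) \<Longrightarrow>
        (\<Sum>i\<in>C0 \<times> \<Xi>. l i * (g' i - Z (fst i))) \<le> fint \<mu> V - fint \<mu> Z"
    using aggregate_multipliers[OF C0 \<open>finite \<Xi>\<close> l(1)] by blast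
  show ?thesis
  proof (rule that[OF \<open>\<mu> \<in> MFplus C\<close>])
    fix u assume "u \<in> K"
    have "(\<Sum>i\<in>C0 \<times> \<Xi>. l i * (g i u - cvar \<alpha> UNIV w (\<lambda>k. fst i \<bullet> z k)))
        \<le> fint \<mu> (\<lambda>c. cvar \<alpha> UNIV p (\<lambda>s. c \<bullet> G u s)) - fint \<mu> (\<lambda>c. cvar \<alpha> UNIV w (\<lambda>k. c \<bullet> z k))"
      by (rule aggregated) (use below in \<open>auto simp: g_def\<close>)
    with l(2)[OF \<open>u \<in> K\<close>]
    show "ob u\<^sub>0 \<le> ob u + fint \<mu> (\<lambda>c. cvar \<alpha> UNIV p (\<lambda>s. c \<bullet> G u s))
                        - fint \<mu> (\<lambda>c. cvar \<alpha> UNIV w (\<lambda>k. c \<bullet> z k))"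
      by linarith
  qed
qed

lemma cvar_lagrangian_bdd_below:
  fixes K :: "'u::euclidean_space set" and G :: "'u \<Rightarrow> 's::finite \<Rightarrow> 'a::euclidean_space"
  assumes "0 \<le> \<alpha>" "\<alpha> < 1" "\<forall>s. 0 \<le> p s" "(\<Sum>s\<in>UNIV. p s) = 1"
    and "bounded K" "linear ob" "\<And>s. linear (\<lambda>u. G u s)" "\<mu> \<in> MFplus C"
  shows "bdd_below ((\<lambda>u. ob u + fint \<mu> (\<lambda>c. cvar \<alpha> UNIV p (\<lambda>s. c \<bullet> G u s)) - Z) ` K)"
proof -
  \<comment> \<open>replacing each cvar by the expectation bounds the Lagrangian from below by a linear function\<close>
  define lower where "lower u = ob u + fint \<mu> (\<lambda>c. \<Sum>s\<in>UNIV. p s * (c \<bullet> G u s))" for u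
  have "linear lower"
    unfolding lower_def
    by (intro linear_compose_add[OF assms(6)] linear_fint linearI)
      (simp_all add: linear_add[OF assms(7)] linear_scale[OF assms(7)] inner_add_right
        sum.distrib sum_distrib_left algebra_simps)
  then obtain m where m: "\<And>u. u \<in> K \<Longrightarrow> m \<le> lower u"
    using bounded_linear_image[OF \<open>bounded K\<close>] bounded_imp_bdd_below
    by (metis bdd_below.E imageI linear_conv_bounded_linear)
  have expectation_le: "fint \<mu> (\<lambda>c. \<Sum>s\<in>UNIV. p s * (c \<bullet> G u s)) \<le> fint \<mu> (\<lambda>c. cvar \<alpha> UNIV p (\<lambda>s. c \<bullet> G u s))" for u
    using \<open>\<mu> \<in> MFplus C\<close> expectation_le_cvar[OF assms(1-4)] by (intro fint_mono)
  then have "m - Z \<le> ob u + fint \<mu> (\<lambda>c. cvar \<alpha> UNIV p (\<lambda>s. c \<bullet> G u s)) - Z" if "u \<in> K" for u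
    using m[OF that, unfolded lower_def] expectation_le[of u] by linarith
  then show ?thesis by (intro bdd_belowI2)
qed

section \<open>The two-stage problem\<close>

lemma polytope_if_polyhedron_in_unit_simplex:
  assumes "polyhedron C" "C \<subseteq> (unit_simplex :: (real^'d) set)"
  shows "polytope C"
proof -
  have "unit_simplex \<subseteq> cbox (0::real^'d) (\<chi> i. 1)"
  proof
    fix c :: "real^'d" assume "c \<in> unit_simplex"
    then have c: "\<forall>i. 0 \<le> c $ i" "(\<Sum>i\<in>UNIV. c $ i) = 1" by (auto simp: unit_simplex_def)
    then have "c $ i \<le> 1" for i
      using member_le_sum[of i UNIV "\<lambda>i. c $ i"] by simp
    then show "c \<in> cbox 0 (\<chi> i. 1)" using c by (simp add: mem_box_cart)
  qed
  then have "bounded C" using assms(2) bounded_cbox bounded_subset by blast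
  with assms(1) show ?thesis by (simp add: polytope_eq_bounded_polyhedron)
qed

lemma linear_two_stage_objective:
  fixes f :: "real^'n1" and q :: "'s::finite \<Rightarrow> real^'n2"
  shows "linear (\<lambda>u::(real^'n1) \<times> (real^'n2^'s). f \<bullet> fst u + (\<Sum>s\<in>UNIV. p s * (q s \<bullet> (snd u $ s))))"
  by (rule linearI) (simp_all add: inner_add_right distrib_left sum.distrib sum_distrib_left
      mult.left_commute)

lemma linear_two_stage_outcome:
  fixes B :: "real^'n1^'d" and D :: "real^'n2^'d"
  shows "linear (\<lambda>u::(real^'n1) \<times> (real^'n2^'s). B *v fst u + D *v (snd u $ s))"
  by (rule linearI) (simp_all add: matrix_vector_right_distrib matrix_vector_mult_scaleR scaleR_add_right)

lemma polyhedron_two_stage_feasible_set: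
  fixes A :: "real^'n1^'m1" and T :: "'s::finite \<Rightarrow> real^'n1^'m2" and W :: "'s \<Rightarrow> real^'n2^'m2"
  shows "polyhedron {(x, y). 0 \<le> x \<and> A *v x \<le> b \<and>
           (\<forall>s. 0 \<le> y $ s \<and> T s *v x + W s *v (y $ s) \<ge> h s)}"
proof -
  have lin: "linear (\<lambda>u::(real^'n1) \<times> (real^'n2^'s). fst u)" "linear (\<lambda>u. A *v fst u)" "linear (\<lambda>u::(real^'n1) \<times> (real^'n2^'s). snd u $ s)"
    "linear (\<lambda>u. T s *v fst u + W s *v (snd u $ s))" for s
    by (rule linearI; simp add: matrix_vector_right_distrib matrix_vector_mult_scaleR algebra_simps)+
  have "{(x, y). 0 \<le> x \<and> A *v x \<le> b \<and> (\<forall>s. 0 \<le> y $ s \<and> T s *v x + W s *v (y $ s) \<ge> h s)} =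
      {u. 0 \<le> fst u} \<inter> {u. A *v fst u \<le> b} \<inter>
      (\<Inter>s. {u. 0 \<le> snd u $ s} \<inter> {u. h s \<le> T s *v fst u + W s *v (snd u $ s)})"
    by auto
  moreover have "polyhedron {u::(real^'n1) \<times> (real^'n2^'s). 0 \<le> snd u $ s} \<and> polyhedron {u. h s \<le> T s *v fst u + W s *v (snd u $ s)}" for s
    using polyhedron_linear_ge[OF lin(3)] polyhedron_linear_ge[OF lin(4)] by blast
  ultimately show ?thesis
    using polyhedron_linear_ge[OF lin(1)] polyhedron_linear_le[OF lin(2)]
    by (auto intro!: polyhedron_Int polyhedron_Inter)
qed

theorem theorem2:
  fixes p :: "'s::finite \<Rightarrow> real"
    and \<alpha> :: real
    and zv :: "'k::finite \<Rightarrow> real^'d" and pz :: "'k \<Rightarrow> real"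
    and C :: "(real^'d) set"
    and A :: "real^'n1^'m1" and b :: "real^'m1" and f :: "real^'n1"
    and q :: "'s \<Rightarrow> real^'n2"
    and T :: "'s \<Rightarrow> real^'n1^'m2" and W :: "'s \<Rightarrow> real^'n2^'m2" and h :: "'s \<Rightarrow> real^'m2"
    and gbar :: "'s \<Rightarrow> real^'n1^'d" and gtil :: "'s \<Rightarrow> real^'n2^'d"
    and F :: "((real^'n1) \<times> (real^'n2^'s)) set"
    and obj :: "real^'n1 \<Rightarrow> real^'n2^'s \<Rightarrow> real"
    and cvG :: "real^'d \<Rightarrow> real^'n1 \<Rightarrow> real^'n2^'s \<Rightarrow> real"
    and cvZ :: "real^'d \<Rightarrow> real"
    and L :: "real^'n1 \<Rightarrow> real^'n2^'s \<Rightarrow> (real^'d \<Rightarrow> real) \<Rightarrow> real"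
    and P :: "((real^'n1) \<times> (real^'n2^'s)) set"
    and dualfun :: "(real^'d \<Rightarrow> real) \<Rightarrow> real"
  assumes p_pos: "\<forall>s. 0 < p s" and p_sum: "(\<Sum>s\<in>UNIV. p s) = 1"
    and alpha: "0 \<le> \<alpha>" "\<alpha> < 1"
    and pz_nonneg: "\<forall>k. 0 \<le> pz k" and pz_sum: "(\<Sum>k\<in>UNIV. pz k) = 1"
    and C_poly: "polyhedron C" and C_ne: "C \<noteq> {}" and C_simplex: "C \<subseteq> unit_simplex"
    and F_def: "F = {(x, y). 0 \<le> x \<and> A *v x \<le> b \<and>
                      (\<forall>s. 0 \<le> y $ s \<and> T s *v x + W s *v (y $ s) \<ge> h s)}"
    and F_compact: "compact F"
    and obj_def: "\<And>x y. obj x y = f \<bullet> x + (\<Sum>s\<in>UNIV. p s * (q s \<bullet> (y $ s)))"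
    and cvG_def: "\<And>c x y. cvG c x y =
           cvar \<alpha> UNIV p (\<lambda>s. c \<bullet> (gbar s *v x + gtil s *v (y $ s)))"
    and cvZ_def: "\<And>c. cvZ c = cvar \<alpha> UNIV pz (\<lambda>k. c \<bullet> zv k)"
    and L_def: "\<And>x y \<mu>. L x y \<mu> = obj x y + fint \<mu> (\<lambda>c. cvG c x y) - fint \<mu> cvZ"
    and P_def: "P = {(x, y) \<in> F. \<forall>c\<in>C. cvG c x y \<le> cvZ c}"
    and dualfun_def: "\<And>\<mu>. dualfun \<mu> = (INF (x, y)\<in>F. L x y \<mu>)"
    and primal_opt_exists: "\<exists>(x, y)\<in>P. \<forall>(x', y')\<in>P. obj x y \<le> obj x' y'"
  shows "(\<exists>\<mu>s\<in>MFplus C. (\<forall>\<mu>\<in>MFplus C. dualfun \<mu> \<le> dualfun \<mu>s) \<and>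
             (\<forall>(x, y)\<in>P. (\<forall>(x', y')\<in>P. obj x y \<le> obj x' y') \<longrightarrow> dualfun \<mu>s = obj x y))
       \<and> (\<forall>xs ys \<mu>s. (xs, ys) \<in> P \<longrightarrow> \<mu>s \<in> MFplus C \<longrightarrow>
            (((\<forall>(x', y')\<in>P. obj xs ys \<le> obj x' y') \<and> (\<forall>\<mu>\<in>MFplus C. dualfun \<mu> \<le> dualfun \<mu>s))
             \<longleftrightarrow> (fint \<mu>s (\<lambda>c. cvG c xs ys) = fint \<mu>s cvZ \<and>
                  (\<forall>(x, y)\<in>F. L xs ys \<mu>s \<le> L x y \<mu>s))))"
proof -
  have p_nonneg: "\<forall>s. 0 \<le> p s" using p_pos by (simp add: less_imp_le)
  define G where "G u s = gbar s *v fst u + gtil s *v (snd u $ s)"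
    for u :: "(real^'n1) \<times> (real^'n2^'s)" and s
  have lin_G: "linear (\<lambda>u. G u s)" for s
    unfolding G_def by (rule linear_two_stage_outcome)
  have lin_obj: "linear (\<lambda>u. obj (fst u) (snd u))"
    unfolding obj_def by (rule linear_two_stage_objective)
  have L_G: "L x y \<mu> = obj x y + fint \<mu> (\<lambda>c. cvar \<alpha> UNIV p (\<lambda>s. c \<bullet> G (x, y) s)) - fint \<mu> cvZ"
    for x y \<mu> by (simp add: L_def cvG_def G_def)
  have cvZ_eq: "cvZ = (\<lambda>c. cvar \<alpha> UNIV pz (\<lambda>k. c \<bullet> zv k))" by (simp add: cvZ_def fun_eq_iff)
  have "polytope C" using C_poly C_simplex by (rule polytope_if_polyhedron_in_unit_simplex)
  have "polyhedron F" unfolding F_def by (rule polyhedron_two_stage_feasible_set)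
  obtain x0 y0 where opt: "(x0, y0) \<in> P" "\<forall>(x', y')\<in>P. obj x0 y0 \<le> obj x' y'"
    using primal_opt_exists by auto
  obtain \<mu>0 where "\<mu>0 \<in> MFplus C" and saddle: "\<And>u. u \<in> F \<Longrightarrow> obj x0 y0 \<le> L (fst u) (snd u) \<mu>0"
    using cvar_dominance_lp_saddle_point[where u\<^sub>0 = "(x0, y0)" and z = zv and G = G, OF alpha p_nonneg p_sum
        pz_nonneg pz_sum \<open>polytope C\<close> \<open>polyhedron F\<close> lin_obj lin_G] opt
    by (auto simp: L_G P_def cvG_def G_def cvZ_eq)
  have bdd: "bdd_below ((\<lambda>(x, y). L x y \<mu>) ` F)" if "\<mu> \<in> MFplus C" for \<mu>
    using cvar_lagrangian_bdd_below[where Z = "fint \<mu> cvZ" and G = G, OF alpha p_nonneg p_sum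
        compact_imp_bounded[OF F_compact] lin_obj lin_G that]
    by (simp add: L_G case_prod_beta')
  have constraint: "fint \<mu> (\<lambda>c. cvG c x y) \<le> fint \<mu> cvZ" if "(x, y) \<in> P" "\<mu> \<in> MFplus C" for x y \<mu>
    using that by (intro fint_mono) (auto simp: P_def)
  have "P \<subseteq> F" by (auto simp: P_def)
  show ?thesis
    by (rule lagrangian_saddle_point_duality[where lhs = "\<lambda>\<mu> x y. fint \<mu> (\<lambda>c. cvG c x y)"
          and rhs = "\<lambda>\<mu>. fint \<mu> cvZ", OF \<open>P \<subseteq> F\<close> constraint L_def dualfun_def bdd opt(1)
          \<open>\<mu>0 \<in> MFplus C\<close> saddle[of "(x, y)" for x y, simplified]])
qed

end
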